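(* Fix a class $n$ and let $\bar\rho\equiv\sum_{m\ne n}\frac{r_m}{C_m}$. If $\bar\rho<1$, then the system is a Guaranteed Rate server to class $n$ with rate $R_n=(1-\bar\rho)C_n$ and error term $E_n=\sum_{m\neq n}\frac{\sigma_m}{(1-\bar\rho)C_m}$; i.e., for every packet $p^{f_n,i}$ of class $n$, $d^{f_n,i}\le GRC^{f_n,i}(R_n)+E_n$.
   Context: A multiclass FIFO system serves packets from $N$ classes (flows $f_1,\dots,f_N$). Class $m$ has constant service rate $C_m>0$. All packets, indexed in order of arrival (ties broken arbitrarily) as $p^{g,1},p^{g,2},\dots$ with arrival times $0\le a^{g,1}\le\cdots$ and lengths $l^{g,j}>0$, depart at $d^{g,j}=\max\{a^{g,j},d^{g,j-1}\}+l^{g,j}/C_{c(j)}$, $d^{g,0}=0$, $c(j)$ the class of $p^{g,j}$. The $i$-th packet of class $n$ is $p^{f_n,i}$ with arrival time $a^{f_n,i}$, departure time $d^{f_n,i}$, length $l^{f_n,i}$. $A_m(s,t)$ is the total length of class-$m$ packets arriving in $[s,t]$; each class satisfies $A_m(s,t)\le r_m(t-s)+\sigma_m$ for all $0\le s\le t$, with $r_m,\sigma_m\ge0$. The guaranteed rate clock for class $n$ with rate $R$ is $GRC^{f_n,0}=0$, $GRC^{f_n,i}(R)=\max\{a^{f_n,i},GRC^{f_n,i-1}(R)\}+l^{f_n,i}/R$. *)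

theory Defs
  imports Complex_Main
begin

text \<open>Packets are indexed globally by arrival order j = 1,2,...,K.
  a j = arrival time, l j = length, c j = class (classes are 0..N-1),
  C m = service rate of class m.\<close>

fun dep :: "(nat \<Rightarrow> real) \<Rightarrow> (nat \<Rightarrow> real) \<Rightarrow> (nat \<Rightarrow> nat) \<Rightarrow> (nat \<Rightarrow> real) \<Rightarrow> nat \<Rightarrow> real" where
  "dep a l c C 0 = 0"
| "dep a l c C (Suc j) = max (a (Suc j)) (dep a l c C j) + l (Suc j) / C (c (Suc j))"

text \<open>Guaranteed rate clock of class n with rate R, evaluated along the global
  packet order: grc a l c n R j is the clock value GRC^{f_n,i}(R) of the last
  class-n packet among packets 1..j (i.e. of packet j itself when c j = n),
  and 0 if there is none.  This is exactly the recursion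
  GRC^{f_n,i} = max(a^{f_n,i}, GRC^{f_n,i-1}) + l^{f_n,i}/R over class-n packets.\<close>
fun grc :: "(nat \<Rightarrow> real) \<Rightarrow> (nat \<Rightarrow> real) \<Rightarrow> (nat \<Rightarrow> nat) \<Rightarrow> nat \<Rightarrow> real \<Rightarrow> nat \<Rightarrow> real" where
  "grc a l c n R 0 = 0"
| "grc a l c n R (Suc j) =
     (if c (Suc j) = n then max (a (Suc j)) (grc a l c n R j) + l (Suc j) / R
      else grc a l c n R j)"

definition arr :: "nat \<Rightarrow> (nat \<Rightarrow> real) \<Rightarrow> (nat \<Rightarrow> real) \<Rightarrow> (nat \<Rightarrow> nat) \<Rightarrow> nat \<Rightarrow> real \<Rightarrow> real \<Rightarrow> real" where
  "arr K a l c m s t = (\<Sum>j\<in>{j\<in>{1..K}. c j = m \<and> s \<le> a j \<and> a j \<le> t}. l j)"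

end

theory Submission
  imports Defs
begin

text \<open>Let packet j of class n depart at the end of a busy period started by packet k, so
  that d j = a k + T, where T is the total service time of packets k..j.  Class m \<noteq> n
  delivers at most r m (a j - a k) + \<sigma> m \<le> r m T + \<sigma> m of work in that period, so
  T \<le> W / C n + \<rho> T + \<Sum> \<sigma> m / C m, with W the class-n work among packets k..j.
  Solving for T gives d j \<le> a k + W / R + E, and a k + W / R is a lower bound for the
  guaranteed rate clock of packet j, since all that class-n work arrives after a k.\<close>

definition class_work :: "(nat \<Rightarrow> real) \<Rightarrow> (nat \<Rightarrow> nat) \<Rightarrow> nat \<Rightarrow> nat \<Rightarrow> nat \<Rightarrow> real" where
  "class_work l c m k j = (\<Sum>i\<in>{i\<in>{k..j}. c i = m}. l i)"

lemma dep_eq_busy_period: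
  assumes "0 \<le> a 1" and "1 \<le> j"
  shows "\<exists>k\<in>{1..j}. dep a l c C j = a k + (\<Sum>i\<in>{k..j}. l i / C (c i))"
  using assms(2)
proof (induction j rule: dec_induct)
  case base
  show ?case using assms(1) by (intro bexI[of _ 1]) auto
next
  case (step j)
  then obtain k where k: "k \<in> {1..j}" "dep a l c C j = a k + (\<Sum>i\<in>{k..j}. l i / C (c i))"
    by blast
  show ?case
  proof (cases "dep a l c C j \<le> a (Suc j)")
    case True
    then show ?thesis by (intro bexI[of _ "Suc j"]) auto
  next
    case False
    then have "dep a l c C (Suc j) = a k + (\<Sum>i\<in>{k..Suc j}. l i / C (c i))"
      using k by simp
    then show ?thesis using k by (intro bexI[of _ k]) auto
  qed
qed

lemma dep_ge_arrival:
  assumes "1 \<le> j" and "0 \<le> l j / C (c j)"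
  shows "a j \<le> dep a l c C j"
  using assms by (cases j) auto

lemma grc_ge_arrival_plus_class_work:
  assumes "1 \<le> s" and "j \<le> K"
    and len_pos: "\<And>i. i \<in> {1..K} \<Longrightarrow> l i > 0"
    and arr_mono: "\<And>i k. i \<in> {1..K} \<Longrightarrow> k \<in> {1..K} \<Longrightarrow> i \<le> k \<Longrightarrow> a i \<le> a k"
    and "0 < class_work l c n s j"
  shows "a s + class_work l c n s j / R \<le> grc a l c n R j"
  using assms(2,5)
proof (induction j)
  case 0
  then show ?case using assms(1) by (simp add: class_work_def)
next
  case (Suc j)
  let ?W = "class_work l c n s j"
  have W_nonneg: "0 \<le> ?W"
    unfolding class_work_def using Suc.prems assms(1) len_pos
    by (intro sum_nonneg) (auto intro: less_imp_le)
  show ?case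
  proof (cases "s \<le> Suc j")
    case False
    then show ?thesis using Suc.prems by (simp add: class_work_def)
  next
    case s_le: True
    have split: "{i\<in>{s..Suc j}. c i = n} =
        (if c (Suc j) = n then insert (Suc j) {i\<in>{s..j}. c i = n} else {i\<in>{s..j}. c i = n})"
      using s_le by (auto simp: le_Suc_eq)
    show ?thesis
    proof (cases "c (Suc j) = n")
      case True
      have "a s + ?W / R \<le> max (a (Suc j)) (grc a l c n R j)"
      proof (cases "0 < ?W")
        case True
        then show ?thesis using Suc by simp
      next
        case False
        then have "?W = 0" using W_nonneg by simp
        moreover have "a s \<le> a (Suc j)" using arr_mono assms(1) s_le Suc.prems by auto
        ultimately show ?thesis by simp
      qed
      moreover have "class_work l c n s (Suc j) = l (Suc j) + ?W"
        using split True by (simp add: class_work_def)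
      ultimately show ?thesis using True by (simp add: add_divide_distrib)
    next
      case False
      then show ?thesis using split Suc by (simp add: class_work_def)
    qed
  qed
qed

lemma service_time_sum_by_class:
  assumes "\<And>i. i \<in> {k..j} \<Longrightarrow> c i < N"
  shows "(\<Sum>i\<in>{k..j}. l i / C (c i)) = (\<Sum>m<N. class_work l c m k j / C m)"
proof -
  have "(\<Sum>i\<in>{k..j}. l i / C (c i)) = (\<Sum>i\<in>{k..j}. \<Sum>m<N. if c i = m then l i / C m else 0)"
    using assms by (intro sum.cong) simp_all
  also have "\<dots> = (\<Sum>m<N. \<Sum>i\<in>{k..j}. if c i = m then l i / C m else 0)"
    by (rule sum.swap)
  also have "\<dots> = (\<Sum>m<N. class_work l c m k j / C m)"
    by (simp add: class_work_def sum.inter_filter[symmetric] sum_divide_distrib)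
  finally show ?thesis .
qed

lemma class_work_le_arr:
  assumes "1 \<le> k" and "j \<le> K"
    and len_nonneg: "\<And>i. i \<in> {1..K} \<Longrightarrow> 0 \<le> l i"
    and arr_mono: "\<And>i k. i \<in> {1..K} \<Longrightarrow> k \<in> {1..K} \<Longrightarrow> i \<le> k \<Longrightarrow> a i \<le> a k"
  shows "class_work l c m k j \<le> arr K a l c m (a k) (a j)"
  unfolding class_work_def arr_def
proof (rule sum_mono2)
  show "{i\<in>{k..j}. c i = m} \<subseteq> {i\<in>{1..K}. c i = m \<and> a k \<le> a i \<and> a i \<le> a j}"
    using assms(1,2) arr_mono by auto
qed (use len_nonneg in auto)

lemma busy_period_length_bound:
  fixes T b :: real and B C r \<sigma> :: "nat \<Rightarrow> real" and M :: "nat set"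
  defines "\<rho> \<equiv> \<Sum>m\<in>M. r m / C m"
  assumes "\<rho> < 1"
    and C_pos: "\<And>m. m \<in> M \<Longrightarrow> 0 < C m"
    and B_le: "\<And>m. m \<in> M \<Longrightarrow> B m \<le> r m * T + \<sigma> m"
    and T_le: "T \<le> b + (\<Sum>m\<in>M. B m / C m)"
  shows "T \<le> b / (1 - \<rho>) + (\<Sum>m\<in>M. \<sigma> m / ((1 - \<rho>) * C m))"
proof -
  have "T \<le> b + (\<Sum>m\<in>M. (r m * T + \<sigma> m) / C m)"
    using T_le B_le C_pos by (smt (verit) divide_right_mono sum_mono)
  also have "\<dots> = b + \<rho> * T + (\<Sum>m\<in>M. \<sigma> m / C m)"
    unfolding \<rho>_def by (simp add: add_divide_distrib sum.distrib sum_distrib_right)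
  finally have "(1 - \<rho>) * T \<le> b + (\<Sum>m\<in>M. \<sigma> m / C m)"
    by (simp add: algebra_simps)
  then have "T \<le> (b + (\<Sum>m\<in>M. \<sigma> m / C m)) / (1 - \<rho>)"
    using \<open>\<rho> < 1\<close> by (simp add: pos_le_divide_eq mult.commute)
  then show ?thesis
    by (simp add: add_divide_distrib sum_divide_distrib mult.commute)
qed

theorem theorem3:
  fixes N K n :: nat and a l :: "nat \<Rightarrow> real" and c :: "nat \<Rightarrow> nat"
    and C r \<sigma> :: "nat \<Rightarrow> real"
  assumes n_cls: "n < N"
    and C_pos: "\<And>m. m < N \<Longrightarrow> C m > 0"
    and r_nn: "\<And>m. m < N \<Longrightarrow> r m \<ge> 0"
    and sigma_nn: "\<And>m. m < N \<Longrightarrow> \<sigma> m \<ge> 0"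
    and cls: "\<And>j. j \<in> {1..K} \<Longrightarrow> c j < N"
    and len_pos: "\<And>j. j \<in> {1..K} \<Longrightarrow> l j > 0"
    and arr_nn: "\<And>j. j \<in> {1..K} \<Longrightarrow> a j \<ge> 0"
    and arr_mono: "\<And>j k. j \<in> {1..K} \<Longrightarrow> k \<in> {1..K} \<Longrightarrow> j \<le> k \<Longrightarrow> a j \<le> a k"
    and envelope: "\<And>m s t. m < N \<Longrightarrow> 0 \<le> s \<Longrightarrow> s \<le> t \<Longrightarrow>
                     arr K a l c m s t \<le> r m * (t - s) + \<sigma> m"
    and load: "(\<Sum>m\<in>{..<N} - {n}. r m / C m) < 1"
  shows "\<forall>j\<in>{1..K}. c j = n \<longrightarrow>
           dep a l c C j \<le>
             grc a l c n ((1 - (\<Sum>m\<in>{..<N} - {n}. r m / C m)) * C n) j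
             + (\<Sum>m\<in>{..<N} - {n}. \<sigma> m / ((1 - (\<Sum>m'\<in>{..<N} - {n}. r m' / C m')) * C m))"
proof (intro ballI impI)
  fix j assume j: "j \<in> {1..K}" and cj: "c j = n"
  let ?\<rho> = "\<Sum>m\<in>{..<N} - {n}. r m / C m"
  obtain k where k: "k \<in> {1..j}" and dep_j: "dep a l c C j = a k + (\<Sum>i\<in>{k..j}. l i / C (c i))"
    using dep_eq_busy_period[of a j l c C] arr_nn j by auto
  define T where "T = (\<Sum>i\<in>{k..j}. l i / C (c i))"
  have "a j \<le> dep a l c C j"
    using j len_pos[OF j] C_pos[OF cls[OF j]] by (intro dep_ge_arrival) auto
  then have idle_le_T: "a j - a k \<le> T" using dep_j T_def by simp
  have W_le: "class_work l c m k j \<le> r m * T + \<sigma> m" if "m < N" for m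
  proof -
    have "class_work l c m k j \<le> r m * (a j - a k) + \<sigma> m"
      using class_work_le_arr[of k j K l a c m] envelope[of m "a k" "a j"] that k j
        len_pos arr_nn arr_mono by (smt (verit) atLeastAtMost_iff order_trans)
    then show ?thesis using idle_le_T r_nn[OF that] by (smt (verit) mult_left_mono)
  qed
  have T_eq: "T = class_work l c n k j / C n + (\<Sum>m\<in>{..<N} - {n}. class_work l c m k j / C m)"
    using service_time_sum_by_class[of k j c N l C] cls k j n_cls
    by (simp add: T_def sum.remove)
  have "T \<le> class_work l c n k j / C n / (1 - ?\<rho>)
                 + (\<Sum>m\<in>{..<N} - {n}. \<sigma> m / ((1 - ?\<rho>) * C m))"
  proof (rule busy_period_length_bound[where B = "\<lambda>m. class_work l c m k j"])
    show "T \<le> class_work l c n k j / C n + (\<Sum>m\<in>{..<N} - {n}. class_work l c m k j / C m)"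
      using T_eq by simp
  qed (use load C_pos W_le in auto)
  moreover have "0 < class_work l c n k j"
    unfolding class_work_def using k j cj len_pos
    by (intro sum_pos2[of _ j]) (auto intro: less_imp_le)
  then have "a k + class_work l c n k j / ((1 - ?\<rho>) * C n) \<le> grc a l c n ((1 - ?\<rho>) * C n) j"
    using k j len_pos arr_mono by (intro grc_ge_arrival_plus_class_work) auto
  ultimately show "dep a l c C j \<le> grc a l c n ((1 - ?\<rho>) * C n) j
             + (\<Sum>m\<in>{..<N} - {n}. \<sigma> m / ((1 - ?\<rho>) * C m))"
    using dep_j T_def by (simp add: mult.commute)
qed

end
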